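(* Let $p$ be an odd prime, $s\ge1$, and $r\ge3$ an integer dividing $\frac{p^s\pm1}2$ (fixed sign). Let $\omega=\eta\sum_{i=0}^{r-2}\Delta_iS_i$, viewed as an $R_r$-linear combination of colored cores in the solid torus $S^1\times D^2$, and let $\tilde\omega=\sum_{i=0}^{r-2}(\eta\Delta_i)^{p^s}\tilde S_i$ be its lift to the $p^s$-fold cyclic cover $\tilde{S^1}\times D^2$. Then, in $V(\tilde{S^1}\times S^1)$, $$\tilde\omega\equiv\mp\left(\frac{-2r}{p}\right)^{s}\eta\sum_{i=0}^{r-2}\Delta_i\tilde S_i\pmod p,$$ where $\mp$ is opposite to the sign in the hypothesis.
   Context: $\lambda=e^{2\pi i/(2r)}$; $\Delta_0=1$, $\Delta_1=-\lambda-\lambda^{-1}$, $\Delta_{i+1}=\Delta_1\Delta_i-\Delta_{i-1}$; $\eta=-i(\lambda-\lambda^{-1})/\sqrt{2r}$. $S_i$ denotes the core of $S^1\times D^2$ with standard thickening colored $i$, and $\tilde S_i$ the core of $\tilde{S^1}\times D^2$ (where $\tilde{S^1}\to S^1$ is the $p^s$-fold cover) colored $i$; these are regarded as elements $[S_i]$, $[\tilde S_i]$ of the modules $V(S^1\times S^1)$, $V(\tilde{S^1}\times S^1)$ of the Blanchet–Habegger–Masbaum–Vogel $SU(2)$ TQFT (with $p=2r$ in their notation) with coefficients in $R_r=\mathbb Z[\tfrac1{2r},\xi_t]$ ($t=4r$ if $r$ even, $8r$ if odd) via $A\mapsto-e^{2\pi i/4r}$. $\left(\frac{-2r}{p}\right)$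 is the Legendre symbol; congruence is modulo $p$ times the module. *)

theory Defs
  imports Complex_Main "HOL-Number_Theory.Number_Theory"
begin

definition lam :: "nat \<Rightarrow> complex" where
  "lam r = exp (2 * pi * \<i> / of_nat (2 * r))"

fun Delta :: "nat \<Rightarrow> nat \<Rightarrow> complex" where
  "Delta r 0 = 1"
| "Delta r (Suc 0) = - lam r - inverse (lam r)"
| "Delta r (Suc (Suc i)) = Delta r (Suc 0) * Delta r (Suc i) - Delta r i"

definition eta :: "nat \<Rightarrow> complex" where
  "eta r = - \<i> * (lam r - inverse (lam r)) / complex_of_real (sqrt (real (2 * r)))"

definition tt :: "nat \<Rightarrow> nat" where
  "tt r = (if even r then 4 * r else 8 * r)"

definition xi :: "nat \<Rightarrow> complex" where
  "xi r = exp (2 * pi * \<i> / of_nat (tt r))"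

text \<open>The coefficient ring R_r = Z[1/(2r), xi_t], as a subring of the complex numbers.\<close>
definition Rr :: "nat \<Rightarrow> complex set" where
  "Rr r = {x. \<exists>(n::nat) (c::nat \<Rightarrow> int).
              x = (\<Sum>k<tt r. of_int (c k) * xi r ^ k) / of_nat (2 * r) ^ n}"

text \<open>Elements of V(S^1 x S^1) (resp. of the covering torus) are represented by their
  coordinates with respect to the basis of colored cores [S_i], i = 0..r-2.
  Two elements are congruent modulo p (times the module) iff all coordinate differences
  lie in p R_r.\<close>
definition cong_mod_module :: "nat \<Rightarrow> nat \<Rightarrow> (nat \<Rightarrow> complex) \<Rightarrow> (nat \<Rightarrow> complex) \<Rightarrow> bool" where
  "cong_mod_module r p x y \<longleftrightarrow>
     (\<forall>i \<le> r - 2. \<exists>z \<in> Rr r. x i - y i = of_nat p * z)"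

definition omega_tilde :: "nat \<Rightarrow> nat \<Rightarrow> nat \<Rightarrow> nat \<Rightarrow> complex" where
  "omega_tilde r p s i = (if i \<le> r - 2 then (eta r * Delta r i) ^ (p ^ s) else 0)"

definition scaled_omega :: "nat \<Rightarrow> complex \<Rightarrow> nat \<Rightarrow> complex" where
  "scaled_omega r c i = (if i \<le> r - 2 then c * eta r * Delta r i else 0)"

end

theory Submission
  imports Defs "HOL-Computational_Algebra.Fundamental_Theorem_Algebra"
begin

(* Write eta Delta_i = (-1)^i kappa (lambda^(i+1) - lambda^-(i+1)) with kappa = -i/sqrt(2r).
   Modulo p, raising to the p-th power is additive on R_r, so
   (lambda^c - lambda^-c)^(p^s) == lambda^(c p^s) - lambda^-(c p^s), and since p^s == -/+1 (mod 2r)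
   this is -/+(lambda^c - lambda^-c).  For the scalar, kappa^(p^s) = kappa (kappa^2)^((p^s-1)/2)
   with kappa^2 = 1/(-2r), and Euler's criterion gives (-2r)^((p^s-1)/2) == (-2r/p)^s (mod p).
   Everything happens inside R_r, which contains kappa because
   sqrt(2r) = sqrt 2 * prod_{k=1}^{r-1} 2 sin(pi k/2r) is a polynomial in roots of unity of
   order 8 and 4r. *)

section \<open>The ring R_r\<close>

lemma tt_gt_0: "r > 0 \<Longrightarrow> tt r > 0"
  by (simp add: tt_def)

lemma xi_power_tt: "r > 0 \<Longrightarrow> xi r ^ tt r = 1"
  using tt_gt_0[of r] by (simp add: xi_def flip: exp_of_nat_mult)

lemma power_eq_power_mod: "(x :: 'a :: monoid_mult) ^ t = 1 \<Longrightarrow> x ^ n = x ^ (n mod t)"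
  by (metis (no_types) div_mult_mod_eq mult.commute power_add power_mult power_one mult_1)

definition Z_xi :: "nat \<Rightarrow> complex set" where
  "Z_xi r = {x. \<exists>c::nat \<Rightarrow> int. x = (\<Sum>k<tt r. of_int (c k) * xi r ^ k)}"

lemma sum_xi_powers_in_Z_xi:
  assumes "r > 0" "finite I"
  shows "(\<Sum>i\<in>I. of_int (f i) * xi r ^ g i) \<in> Z_xi r"
proof -
  let ?t = "tt r"
  let ?J = "\<lambda>k. {i\<in>I. g i mod ?t = k}"
  have "(\<Sum>i\<in>I. of_int (f i) * xi r ^ g i) = (\<Sum>k<?t. \<Sum>i\<in>?J k. of_int (f i) * xi r ^ g i)"
    using assms tt_gt_0[of r] by (intro sum.group[symmetric]) auto
  also have "\<dots> = (\<Sum>k<?t. of_int (\<Sum>i\<in>?J k. f i) * xi r ^ k)"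
    using power_eq_power_mod[OF xi_power_tt[OF \<open>r > 0\<close>]]
    by (auto simp: sum_distrib_right intro!: sum.cong)
  finally have eq: "(\<Sum>i\<in>I. of_int (f i) * xi r ^ g i) = (\<Sum>k<?t. of_int (\<Sum>i\<in>?J k. f i) * xi r ^ k)" .
  show ?thesis
    unfolding Z_xi_def by (rule CollectI, rule exI, rule eq)
qed

lemma Z_xi_add:
  assumes "x \<in> Z_xi r" "y \<in> Z_xi r"
  shows "x + y \<in> Z_xi r"
proof -
  obtain a b where "x = (\<Sum>k<tt r. of_int (a k) * xi r ^ k)" "y = (\<Sum>k<tt r. of_int (b k) * xi r ^ k)"
    using assms unfolding Z_xi_def by auto
  then have eq: "x + y = (\<Sum>k<tt r. of_int (a k + b k) * xi r ^ k)"
    by (simp add: sum.distrib distrib_right)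
  show ?thesis
    unfolding Z_xi_def by (rule CollectI, rule exI, rule eq)
qed

lemma Z_xi_uminus:
  assumes "x \<in> Z_xi r"
  shows "- x \<in> Z_xi r"
proof -
  obtain a where "x = (\<Sum>k<tt r. of_int (a k) * xi r ^ k)"
    using assms unfolding Z_xi_def by auto
  then have eq: "- x = (\<Sum>k<tt r. of_int (- a k) * xi r ^ k)"
    by (simp add: sum_negf)
  show ?thesis
    unfolding Z_xi_def by (rule CollectI, rule exI, rule eq)
qed

lemma Z_xi_mult:
  assumes "r > 0" "x \<in> Z_xi r" "y \<in> Z_xi r"
  shows "x * y \<in> Z_xi r"
proof -
  obtain a b where "x = (\<Sum>k<tt r. of_int (a k) * xi r ^ k)" "y = (\<Sum>k<tt r. of_int (b k) * xi r ^ k)"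
    using assms unfolding Z_xi_def by auto
  then have "x * y = (\<Sum>(k, l)\<in>{..<tt r} \<times> {..<tt r}. of_int (a k * b l) * xi r ^ (k + l))"
    by (simp add: sum_product sum.cartesian_product power_add mult_ac)
  then show ?thesis
    using sum_xi_powers_in_Z_xi[OF \<open>r > 0\<close>, of "{..<tt r} \<times> {..<tt r}"
        "\<lambda>(k, l). a k * b l" "\<lambda>(k, l). k + l"]
    by (simp add: case_prod_beta)
qed

lemma Z_xi_xi_power: "r > 0 \<Longrightarrow> xi r ^ j \<in> Z_xi r"
  using sum_xi_powers_in_Z_xi[of r "{()}" "\<lambda>_. 1" "\<lambda>_. j"] by simp

lemma Z_xi_of_int: "r > 0 \<Longrightarrow> of_int a \<in> Z_xi r"
  using sum_xi_powers_in_Z_xi[of r "{()}" "\<lambda>_. a" "\<lambda>_. 0"] by simp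

lemma Z_xi_of_nat: "r > 0 \<Longrightarrow> of_nat a \<in> Z_xi r"
  using Z_xi_of_int[of r "int a"] by simp

lemma Rr_iff: "x \<in> Rr r \<longleftrightarrow> (\<exists>z n. z \<in> Z_xi r \<and> x = z / of_nat (2 * r) ^ n)"
  unfolding Rr_def Z_xi_def by blast

lemma Rr_I: "z \<in> Z_xi r \<Longrightarrow> z / of_nat (2 * r) ^ n \<in> Rr r"
  unfolding Rr_iff by blast

lemma Z_xi_subset_Rr: "z \<in> Z_xi r \<Longrightarrow> z \<in> Rr r"
  using Rr_I[of z r 0] by simp

lemma Rr_add:
  assumes "r > 0" "x \<in> Rr r" "y \<in> Rr r"
  shows "x + y \<in> Rr r"
proof -
  obtain a n b m where ab: "a \<in> Z_xi r" "b \<in> Z_xi r"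
    and xy: "x = a / of_nat (2 * r) ^ n" "y = b / of_nat (2 * r) ^ m"
    using assms unfolding Rr_iff by auto
  have "x + y = (of_nat ((2 * r) ^ m) * a + of_nat ((2 * r) ^ n) * b) / of_nat (2 * r) ^ (n + m)"
    using \<open>r > 0\<close> unfolding xy by (simp add: field_simps power_add)
  moreover have "of_nat ((2 * r) ^ m) * a + of_nat ((2 * r) ^ n) * b \<in> Z_xi r"
    by (intro Z_xi_add Z_xi_mult Z_xi_of_nat) (use ab \<open>r > 0\<close> in auto)
  ultimately show ?thesis
    using Rr_I by metis
qed

lemma Rr_mult:
  assumes "r > 0" "x \<in> Rr r" "y \<in> Rr r"
  shows "x * y \<in> Rr r"
proof -
  obtain a n b m where ab: "a \<in> Z_xi r" "b \<in> Z_xi r"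
    and xy: "x = a / of_nat (2 * r) ^ n" "y = b / of_nat (2 * r) ^ m"
    using assms unfolding Rr_iff by auto
  have "x * y = (a * b) / of_nat (2 * r) ^ (n + m)"
    unfolding xy by (simp add: power_add)
  then show ?thesis
    using Rr_I[OF Z_xi_mult[OF \<open>r > 0\<close> ab]] by simp
qed

lemma Rr_uminus: "x \<in> Rr r \<Longrightarrow> - x \<in> Rr r"
  unfolding Rr_iff by (metis Z_xi_uminus minus_divide_left)

lemma Rr_diff: "r > 0 \<Longrightarrow> x \<in> Rr r \<Longrightarrow> y \<in> Rr r \<Longrightarrow> x - y \<in> Rr r"
  using Rr_add[of r x "- y"] Rr_uminus[of y r] by simp

lemma Rr_of_int: "r > 0 \<Longrightarrow> of_int a \<in> Rr r"
  by (intro Z_xi_subset_Rr Z_xi_of_int)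

lemma Rr_zero: "r > 0 \<Longrightarrow> 0 \<in> Rr r"
  using Rr_of_int[of r 0] by simp

lemma Rr_one: "r > 0 \<Longrightarrow> 1 \<in> Rr r"
  using Rr_of_int[of r 1] by simp

lemma Rr_of_nat: "r > 0 \<Longrightarrow> of_nat a \<in> Rr r"
  by (intro Z_xi_subset_Rr Z_xi_of_nat)

lemma Rr_xi_power: "r > 0 \<Longrightarrow> xi r ^ j \<in> Rr r"
  by (intro Z_xi_subset_Rr Z_xi_xi_power)

lemma Rr_inverse_2r: "r > 0 \<Longrightarrow> 1 / of_nat (2 * r) \<in> Rr r"
  using Rr_I[OF Z_xi_of_int[of r 1], of 1] by simp

lemma Rr_power: "r > 0 \<Longrightarrow> x \<in> Rr r \<Longrightarrow> x ^ n \<in> Rr r"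
  by (induction n) (auto intro: Rr_mult Rr_one)

lemma Rr_prod: "r > 0 \<Longrightarrow> (\<And>i. i \<in> I \<Longrightarrow> f i \<in> Rr r) \<Longrightarrow> prod f I \<in> Rr r"
  by (induction I rule: infinite_finite_induct) (auto intro: Rr_mult Rr_one)

lemma Rr_sum: "r > 0 \<Longrightarrow> (\<And>i. i \<in> I \<Longrightarrow> f i \<in> Rr r) \<Longrightarrow> sum f I \<in> Rr r"
  by (induction I rule: infinite_finite_induct) (auto intro: Rr_add Rr_zero)

section \<open>Congruences modulo p in R_r\<close>

definition cong_Rr :: "nat \<Rightarrow> nat \<Rightarrow> complex \<Rightarrow> complex \<Rightarrow> bool" where
  "cong_Rr r p x y \<longleftrightarrow> (\<exists>z\<in>Rr r. x - y = of_nat p * z)"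

lemma cong_Rr_refl: "r > 0 \<Longrightarrow> cong_Rr r p x x"
  unfolding cong_Rr_def by (auto intro!: bexI[of _ 0] Rr_zero)

lemma cong_Rr_trans:
  assumes "r > 0" "cong_Rr r p x y" "cong_Rr r p y w"
  shows "cong_Rr r p x w"
proof -
  obtain z1 z2 where "z1 \<in> Rr r" "z2 \<in> Rr r" "x - y = of_nat p * z1" "y - w = of_nat p * z2"
    using assms unfolding cong_Rr_def by auto
  then have "x - w = of_nat p * (z1 + z2)" "z1 + z2 \<in> Rr r"
    using Rr_add[OF \<open>r > 0\<close>] by (auto simp: algebra_simps)
  then show ?thesis
    unfolding cong_Rr_def by blast
qed

lemma cong_Rr_mult:
  assumes "r > 0" "cong_Rr r p x y" "cong_Rr r p x' y'" "x \<in> Rr r" "y' \<in> Rr r"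
  shows "cong_Rr r p (x * x') (y * y')"
proof -
  obtain z1 z2 where z: "z1 \<in> Rr r" "z2 \<in> Rr r" "x - y = of_nat p * z1" "x' - y' = of_nat p * z2"
    using assms unfolding cong_Rr_def by auto
  have "x * x' - y * y' = x * (x' - y') + (x - y) * y'"
    by (simp add: algebra_simps)
  also have "\<dots> = of_nat p * (x * z2 + z1 * y')"
    using z by (simp add: algebra_simps)
  finally show ?thesis
    unfolding cong_Rr_def using assms z by (blast intro: Rr_add Rr_mult)
qed

lemma cong_Rr_mult_left:
  assumes "r > 0" "c \<in> Rr r" "cong_Rr r p x y"
  shows "cong_Rr r p (c * x) (c * y)"
proof -
  obtain z where "z \<in> Rr r" "x - y = of_nat p * z"
    using assms unfolding cong_Rr_def by auto
  then have "c * x - c * y = of_nat p * (c * z)" "c * z \<in> Rr r"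
    using assms by (auto simp: algebra_simps simp flip: right_diff_distrib intro: Rr_mult)
  then show ?thesis
    unfolding cong_Rr_def by blast
qed

lemma cong_Rr_power:
  assumes "r > 0" "cong_Rr r p x y" "x \<in> Rr r" "y \<in> Rr r"
  shows "cong_Rr r p (x ^ n) (y ^ n)"
proof (induction n)
  case 0
  show ?case using cong_Rr_refl[OF \<open>r > 0\<close>] by simp
next
  case (Suc n)
  show ?case
    unfolding power_Suc using assms Suc by (intro cong_Rr_mult Rr_power)
qed

lemma cong_Rr_of_int:
  assumes "r > 0" "[a = b] (mod int p)"
  shows "cong_Rr r p (of_int a) (of_int b)"
proof -
  obtain k where "a - b = int p * k"
    using assms(2) by (metis cong_iff_dvd_diff dvdE)
  then have "of_int a - of_int b = of_nat p * (of_int k :: complex)"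
    by (metis of_int_diff of_int_mult of_int_of_nat_eq)
  then show ?thesis
    unfolding cong_Rr_def using Rr_of_int[OF \<open>r > 0\<close>] by blast
qed

lemma cong_Rr_inverse:
  assumes "r > 0" "x * y = 1" "a * a = 1" "x \<in> Rr r" "a \<in> Rr r" "cong_Rr r p y a"
  shows "cong_Rr r p x a"
proof -
  obtain z where z: "z \<in> Rr r" "y - a = of_nat p * z"
    using assms unfolding cong_Rr_def by auto
  have "x - a = x * a * (a - y)"
    using assms(2,3) by (simp add: algebra_simps)
  also have "\<dots> = of_nat p * - (x * a * z)"
    using z by (simp add: algebra_simps)
  finally show ?thesis
    unfolding cong_Rr_def using assms z by (blast intro: Rr_uminus Rr_mult)
qed

lemma cong_Rr_add_power_prime:
  assumes "r > 0" "prime p" "x \<in> Rr r" "y \<in> Rr r"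
  shows "cong_Rr r p ((x + y) ^ p) (x ^ p + y ^ p)"
proof -
  let ?M = "{..p} - {0, p}"
  let ?c = "\<lambda>k. of_nat ((p choose k) div p) * x ^ k * y ^ (p - k)"
  have "(x + y) ^ p = (\<Sum>k\<le>p. of_nat (p choose k) * x ^ k * y ^ (p - k))"
    by (rule binomial_ring)
  also have "\<dots> = (\<Sum>k\<in>?M. of_nat (p choose k) * x ^ k * y ^ (p - k)) + (x ^ p + y ^ p)"
    using prime_gt_0_nat[OF \<open>prime p\<close>] by (subst sum.subset_diff[of "{0, p}"]) auto
  also have "(\<Sum>k\<in>?M. of_nat (p choose k) * x ^ k * y ^ (p - k)) = of_nat p * (\<Sum>k\<in>?M. ?c k)"
    unfolding sum_distrib_left
  proof (rule sum.cong[OF refl])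
    fix k assume "k \<in> ?M"
    then have "p dvd (p choose k)"
      using \<open>prime p\<close> by (intro dvd_choose_prime) auto
    then show "of_nat (p choose k) * x ^ k * y ^ (p - k) = of_nat p * ?c k"
      by (simp flip: of_nat_mult)
  qed
  finally show ?thesis
    unfolding cong_Rr_def using assms
    by (intro bexI[of _ "\<Sum>k\<in>?M. ?c k"] Rr_sum) (auto intro!: Rr_mult Rr_power Rr_of_nat)
qed

lemma cong_Rr_diff_power_prime_power:
  assumes "r > 0" "prime p" "odd p" "x \<in> Rr r" "y \<in> Rr r"
  shows "cong_Rr r p ((x - y) ^ (p ^ s)) (x ^ (p ^ s) - y ^ (p ^ s))"
proof (induction s)
  case 0
  show ?case using cong_Rr_refl[OF \<open>r > 0\<close>] by simp
next
  case (Suc s)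
  let ?x = "x ^ (p ^ s)" and ?y = "y ^ (p ^ s)"
  have Rr: "?x \<in> Rr r" "?y \<in> Rr r" "x - y \<in> Rr r"
    using assms by (auto intro: Rr_power Rr_diff)
  have "cong_Rr r p (((x - y) ^ (p ^ s)) ^ p) ((?x - ?y) ^ p)"
    using Suc Rr assms by (intro cong_Rr_power Rr_power Rr_diff)
  moreover have "cong_Rr r p ((?x + - ?y) ^ p) (?x ^ p + (- ?y) ^ p)"
    using Rr assms by (intro cong_Rr_add_power_prime Rr_uminus)
  moreover have "z ^ (p ^ Suc s) = (z ^ (p ^ s)) ^ p" for z :: complex
    by (simp only: power_Suc2 power_mult)
  ultimately show ?case
    using cong_Rr_trans[OF \<open>r > 0\<close>] \<open>odd p\<close> by (simp add: power_minus_odd)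
qed

section \<open>Roots of unity and sqrt(2r) in R_r\<close>

lemma xi_power_eq_cis:
  assumes "r > 0" "m * k = tt r"
  shows "xi r ^ m = cis (2 * pi / real k)"
proof -
  have "m > 0"
    using assms tt_gt_0[of r] by (auto intro: gr0I)
  have "xi r ^ m = exp (of_nat m * (2 * pi * \<i> / of_nat (m * k)))"
    unfolding xi_def assms(2) by (rule exp_of_nat_mult[symmetric])
  also have "\<dots> = exp (\<i> * complex_of_real (2 * pi / real k))"
    using \<open>m > 0\<close> by (simp add: field_simps)
  finally show ?thesis
    by (simp add: cis_conv_exp)
qed

lemma Rr_cis:
  assumes "r > 0" "k dvd tt r"
  shows "cis (2 * pi / real k) \<in> Rr r"
proof -
  obtain m where "m * k = tt r"
    using assms(2) by (metis dvdE mult.commute)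
  then show ?thesis
    using xi_power_eq_cis[OF \<open>r > 0\<close>] Rr_xi_power[OF \<open>r > 0\<close>] by metis
qed

lemma Rr_inverse_root_of_unity:
  assumes "r > 0" "z \<in> Rr r" "z ^ n = 1" "n > 0"
  shows "inverse z \<in> Rr r"
proof -
  have "z * z ^ (n - 1) = 1"
    using assms by (simp flip: power_Suc)
  then show ?thesis
    using Rr_power[OF \<open>r > 0\<close> \<open>z \<in> Rr r\<close>] by (metis inverse_unique)
qed

lemma lam_eq_cis: "lam r = cis (2 * pi / real (2 * r))"
  unfolding lam_def cis_conv_exp by (simp add: field_simps)

lemma lam_power_2r: "lam r ^ (2 * r) = 1"
  by (simp add: lam_eq_cis DeMoivre)

lemma Rr_lam: "r > 0 \<Longrightarrow> lam r \<in> Rr r"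
  unfolding lam_eq_cis by (rule Rr_cis) (auto simp: tt_def)

lemma Rr_inverse_lam: "r > 0 \<Longrightarrow> inverse (lam r) \<in> Rr r"
  using Rr_inverse_root_of_unity[OF _ Rr_lam lam_power_2r] by simp

lemma Rr_imaginary_unit: "r > 0 \<Longrightarrow> \<i> \<in> Rr r"
  using Rr_cis[of r 4] by (simp add: tt_def complex_eq_iff)

lemma Rr_sqrt_2:
  assumes "r > 0"
  shows "complex_of_real (sqrt 2) \<in> Rr r"
proof -
  have "8 dvd tt r"
    by (auto simp: tt_def elim!: evenE)
  then have "cis (pi / 4) \<in> Rr r"
    using Rr_cis[OF \<open>r > 0\<close>, of 8] by simp
  moreover have "complex_of_real (sqrt 2) = cis (pi / 4) * (1 - \<i>)"
    by (simp add: complex_eq_iff cos_45 sin_45)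
  ultimately show ?thesis
    using \<open>r > 0\<close> by (auto intro!: Rr_mult Rr_diff Rr_imaginary_unit Rr_one)
qed

lemma prod_one_minus_roots_of_unity:
  assumes "n > 0"
  shows "(\<Prod>k\<in>{1..<n}. 1 - cis (2 * pi * real k / real n)) = of_nat n"
proof -
  define \<omega> where "\<omega> k = cis (2 * pi * real k / real n)" for k
  define P :: "complex poly" where "P = monom 1 n - 1"
  have poly_P: "poly P z = z ^ n - 1" for z
    by (simp add: P_def poly_monom)
  have "rsquarefree P"
    unfolding rsquarefree_roots
  proof (intro allI notI)
    fix z assume "poly P z = 0 \<and> poly (pderiv P) z = 0"
    then have "z ^ n = 1" "of_nat n * z ^ (n - 1) = 0"
      by (simp_all add: poly_P P_def pderiv_diff pderiv_monom poly_monom)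
    then show False
      using \<open>n > 0\<close> by (auto simp: power_0_left)
  qed
  moreover have "degree P = n"
    using \<open>n > 0\<close> unfolding P_def diff_conv_add_uminus
    by (subst degree_add_eq_left) (auto simp: degree_monom_eq)
  then have "lead_coeff P = 1"
    using \<open>n > 0\<close> by (simp add: P_def)
  ultimately have "P = (\<Prod>z\<in>{z. z ^ n = 1}. [:-z, 1:])"
    using complex_poly_decompose_rsquarefree[of P] poly_P by simp
  also have "\<dots> = (\<Prod>k<n. [:- \<omega> k, 1:])"
    unfolding \<omega>_def by (rule prod.reindex_bij_betw[symmetric, OF bij_betw_roots_unity[OF \<open>n > 0\<close>]])
  also have "\<dots> = [:-1, 1:] * (\<Prod>k\<in>{1..<n}. [:- \<omega> k, 1:])"
    using \<open>n > 0\<close> by (simp add: \<omega>_def prod.atLeast1_atMost_eq lessThan_atLeast0 prod.atLeast_Suc_lessThan)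
  finally have factor: "P = [:-1, 1:] * (\<Prod>k\<in>{1..<n}. [:- \<omega> k, 1:])" .
  have "P = [:-1, 1:] * (\<Sum>i<n. monom 1 i)"
    by (intro poly_eq_poly_eq_iff[THEN iffD1] ext)
      (simp add: poly_P poly_sum poly_monom power_diff_1_eq left_diff_distrib)
  then have "(\<Sum>i<n. monom 1 i) = (\<Prod>k\<in>{1..<n}. [:- \<omega> k, 1:])"
    using factor by (metis mult_left_cancel pCons_eq_0_iff zero_neq_one)
  from arg_cong[OF this, of "\<lambda>q. poly q 1"] show ?thesis
    by (simp add: \<omega>_def poly_sum poly_monom poly_prod)
qed

lemma norm_one_minus_cis_double: "norm (1 - cis (2 * x)) = 2 * \<bar>sin x\<bar>"
proof -
  have "1 - cis (2 * x) = cis x * (- 2 * \<i> * complex_of_real (sin x))"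
    by (simp add: complex_eq_iff cos_double_sin sin_double power2_eq_square)
  then show ?thesis
    by (simp add: norm_mult)
qed

lemma prod_two_sin_eq_sqrt:
  assumes "r > 0"
  shows "(\<Prod>k\<in>{1..<r}. 2 * sin (pi * real k / real (2 * r))) = sqrt (real r)"
proof -
  define c where "c k = 2 * sin (pi * real k / real (2 * r))" for k
  have c_pos: "c k > 0" if "0 < k" "k < 2 * r" for k
    unfolding c_def using that by (intro mult_pos_pos sin_gt_zero) (auto simp: field_simps)
  have "real (2 * r) = norm (\<Prod>k\<in>{1..<2 * r}. 1 - cis (2 * (pi * real k / real (2 * r))))"
    using prod_one_minus_roots_of_unity[of "2 * r"] \<open>r > 0\<close> by (simp add: mult.assoc)
  also have "\<dots> = (\<Prod>k\<in>{1..<2 * r}. c k)"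
    unfolding prod_norm[symmetric] norm_one_minus_cis_double
    by (intro prod.cong) (use c_pos in \<open>auto simp: c_def abs_of_pos\<close>)
  also have "\<dots> = (\<Prod>k\<in>{1..<r}. c k) * (\<Prod>k\<in>{r..<2 * r}. c k)"
    using \<open>r > 0\<close> by (intro prod.atLeastLessThan_concat[symmetric]) auto
  also have "(\<Prod>k\<in>{r..<2 * r}. c k) = c r * (\<Prod>k\<in>{Suc r..<2 * r}. c k)"
    using \<open>r > 0\<close> by (intro prod.atLeast_Suc_lessThan) auto
  also have "(\<Prod>k\<in>{Suc r..<2 * r}. c k) = (\<Prod>k\<in>{1..<r}. c k)"
  proof (rule prod.reindex_bij_witness[of _ "\<lambda>k. 2 * r - k" "\<lambda>k. 2 * r - k"])
    fix k assume "k \<in> {Suc r..<2 * r}"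
    then have "pi * real (2 * r - k) / real (2 * r) = pi - pi * real k / real (2 * r)"
      by (simp add: of_nat_diff field_simps)
    then show "c (2 * r - k) = c k"
      by (simp add: c_def)
  qed auto
  also have "c r = 2"
    using \<open>r > 0\<close> by (simp add: c_def)
  finally have "real r = (\<Prod>k\<in>{1..<r}. c k) ^ 2"
    by (simp add: power2_eq_square)
  moreover have "(\<Prod>k\<in>{1..<r}. c k) > 0"
    by (intro prod_pos) (auto intro: c_pos)
  ultimately show ?thesis
    unfolding c_def by (metis real_sqrt_abs abs_of_pos)
qed

lemma Rr_two_sin:
  assumes "r > 0"
  shows "complex_of_real (2 * sin (pi * real k / real (2 * r))) \<in> Rr r"
proof -
  define \<zeta> where "\<zeta> = cis (2 * pi / real (4 * r))"
  have "\<zeta> \<in> Rr r"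
    unfolding \<zeta>_def using \<open>r > 0\<close> by (intro Rr_cis) (auto simp: tt_def)
  moreover have "inverse \<zeta> \<in> Rr r"
    using Rr_inverse_root_of_unity[OF \<open>r > 0\<close> \<open>\<zeta> \<in> Rr r\<close>, of "4 * r"] \<open>r > 0\<close>
    by (simp add: \<zeta>_def DeMoivre)
  moreover have "complex_of_real (2 * sin (pi * real k / real (2 * r))) = - \<i> * (\<zeta> ^ k - inverse \<zeta> ^ k)"
  proof -
    have "real k * (2 * pi / real (4 * r)) = pi * real k / real (2 * r)"
      by (simp add: field_simps)
    then show ?thesis
      unfolding \<zeta>_def power_inverse DeMoivre by (simp only:) (simp add: complex_eq_iff)
  qed
  ultimately show ?thesis
    using \<open>r > 0\<close> by (auto intro!: Rr_mult Rr_uminus Rr_diff Rr_power Rr_imaginary_unit)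
qed

lemma Rr_sqrt_2r:
  assumes "r > 0"
  shows "complex_of_real (sqrt (real (2 * r))) \<in> Rr r"
proof -
  have "complex_of_real (sqrt (real (2 * r)))
      = of_real (sqrt 2) * (\<Prod>k\<in>{1..<r}. of_real (2 * sin (pi * real k / real (2 * r))))"
    unfolding of_real_prod[symmetric] prod_two_sin_eq_sqrt[OF assms]
    by (simp add: real_sqrt_mult)
  then show ?thesis
    using assms by (simp only:) (intro Rr_mult Rr_sqrt_2 Rr_prod Rr_two_sin)
qed

definition kappa :: "nat \<Rightarrow> complex" where
  "kappa r = - \<i> / complex_of_real (sqrt (real (2 * r)))"

lemma eta_eq_kappa: "eta r = kappa r * (lam r - inverse (lam r))"
  unfolding eta_def kappa_def by simp

lemma Rr_kappa:
  assumes "r > 0"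
  shows "kappa r \<in> Rr r"
proof -
  define q where "q = complex_of_real (sqrt (real (2 * r)))"
  have "q * q = of_nat (2 * r)"
    unfolding q_def by (simp only: flip: of_real_mult) simp
  moreover from this have "q \<noteq> 0"
    using assms by auto
  ultimately have "kappa r = - \<i> * q * (1 / of_nat (2 * r))"
    unfolding kappa_def q_def[symmetric] using assms by (simp add: field_simps mult.assoc)
  then show ?thesis
    unfolding q_def using assms by (simp only:) (intro Rr_mult Rr_uminus Rr_imaginary_unit Rr_sqrt_2r Rr_inverse_2r)
qed

lemma kappa_square: "r > 0 \<Longrightarrow> kappa r ^ 2 * of_int (- 2 * int r) = 1"
  unfolding kappa_def by (simp add: power_divide flip: of_real_power)

section \<open>The coordinates of the lifted vector modulo p\<close>

lemma lam_diff_mult_Delta: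
  "(lam r - inverse (lam r)) * Delta r i = (-1) ^ i * (lam r ^ Suc i - inverse (lam r) ^ Suc i)"
proof (induction r i rule: Delta.induct)
  case (1 r)
  show ?case by simp
next
  case (2 r)
  show ?case by (simp add: algebra_simps power2_eq_square)
next
  case (3 r i)
  define L M where "L = lam r" and "M = inverse L"
  define u where "u n = L ^ n - M ^ n" for n
  have "L * M = 1"
    by (simp add: L_def M_def lam_def)
  have u_rec: "(L + M) * u (Suc (Suc i)) = u (Suc (Suc (Suc i))) + L * M * u (Suc i)"
    by (simp add: u_def algebra_simps)
  have "(L - M) * Delta r (Suc (Suc i))
      = - (L + M) * ((L - M) * Delta r (Suc i)) - (L - M) * Delta r i"
    by (simp add: L_def M_def algebra_simps)
  also have "\<dots> = - (L + M) * ((-1) ^ Suc i * u (Suc (Suc i))) - (-1) ^ i * u (Suc i)"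
    using 3 unfolding M_def[symmetric] L_def[symmetric] u_def[symmetric] by simp
  also have "\<dots> = (-1) ^ i * ((L + M) * u (Suc (Suc i)) - u (Suc i))"
    by (simp add: algebra_simps)
  also have "\<dots> = (-1) ^ Suc (Suc i) * u (Suc (Suc (Suc i)))"
    unfolding u_rec \<open>L * M = 1\<close> by simp
  finally show ?case
    unfolding L_def M_def u_def .
qed

lemma Legendre_eq_1_or_minus_1:
  assumes "\<not> int p dvd a"
  shows "Legendre a (int p) = 1 \<or> Legendre a (int p) = -1"
  using assms by (auto simp: Legendre_def cong_0_iff)

lemma half_pred_prime_power_Suc:
  assumes "odd (p :: nat)"
  shows "(p ^ Suc s - 1) div 2 = p * ((p ^ s - 1) div 2) + (p - 1) div 2"
proof -
  obtain a b where "p ^ s = 2 * a + 1" "p = 2 * b + 1"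
    using assms by (metis even_power oddE)
  then show ?thesis
    by (simp add: algebra_simps)
qed

lemma euler_criterion_prime_power:
  assumes "prime p" "odd p" "\<not> int p dvd a"
  shows "[a ^ ((p ^ s - 1) div 2) = Legendre a (int p) ^ s] (mod int p)"
proof (induction s)
  case 0
  show ?case by simp
next
  case (Suc s)
  let ?\<chi> = "Legendre a (int p)"
  have "2 < p"
    using prime_ge_2_nat[OF \<open>prime p\<close>] \<open>odd p\<close> by (cases "p = 2") auto
  have "a ^ ((p ^ Suc s - 1) div 2) = (a ^ ((p ^ s - 1) div 2)) ^ p * a ^ ((p - 1) div 2)"
    unfolding half_pred_prime_power_Suc[OF \<open>odd p\<close>] power_add
    by (metis power_mult mult.commute)
  also have "[\<dots> = (?\<chi> ^ s) ^ p * ?\<chi>] (mod int p)"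
    using euler_criterion[OF \<open>prime p\<close> \<open>2 < p\<close>]
    by (intro cong_mult cong_pow Suc) (simp add: cong_sym)
  also have "(?\<chi> ^ s) ^ p * ?\<chi> = ?\<chi> ^ Suc s"
  proof -
    have "?\<chi> ^ p = ?\<chi>"
      using Legendre_eq_1_or_minus_1[OF \<open>\<not> int p dvd a\<close>] \<open>odd p\<close> by auto
    then show ?thesis
      by (metis power_mult mult.commute power_Suc2)
  qed
  finally show ?case .
qed

lemma kappa_power_prime_power_cong:
  assumes "r > 0" "prime p" "odd p" "\<not> int p dvd 2 * int r"
  shows "cong_Rr r p (kappa r ^ p ^ s) (of_int (Legendre (- 2 * int r) (int p) ^ s) * kappa r)"
proof -
  define e where "e = (p ^ s - 1) div 2"
  define \<chi> where "\<chi> = Legendre (- 2 * int r) (int p) ^ s"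
  have "\<not> int p dvd - 2 * int r"
    using assms(4) by simp
  have "odd (p ^ s)"
    using \<open>odd p\<close> by simp
  then have "p ^ s = Suc (2 * e)"
    unfolding e_def by (auto elim!: oddE)
  then have power_eq: "kappa r ^ p ^ s = kappa r * (kappa r ^ 2) ^ e"
    by (simp add: power_mult)
  have "cong_Rr r p ((kappa r ^ 2) ^ e) (of_int \<chi>)"
  proof (rule cong_Rr_inverse)
    show "(kappa r ^ 2) ^ e * of_int ((- 2 * int r) ^ e) = 1"
      using kappa_square[OF \<open>r > 0\<close>] by (simp flip: power_mult_distrib)
    have "Legendre (- 2 * int r) (int p) = 1 \<or> Legendre (- 2 * int r) (int p) = -1"
      by (rule Legendre_eq_1_or_minus_1) fact
    then show "of_int \<chi> * of_int \<chi> = (1 :: complex)"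
      unfolding \<chi>_def by (auto simp flip: power_mult_distrib)
    show "cong_Rr r p (of_int ((- 2 * int r) ^ e)) (of_int \<chi>)"
      unfolding e_def \<chi>_def
      by (intro cong_Rr_of_int euler_criterion_prime_power) fact+
  qed (use assms in \<open>auto intro: Rr_power Rr_kappa Rr_of_int\<close>)
  then have "cong_Rr r p (kappa r * (kappa r ^ 2) ^ e) (kappa r * of_int \<chi>)"
    by (rule cong_Rr_mult_left[OF \<open>r > 0\<close> Rr_kappa[OF \<open>r > 0\<close>]])
  then show ?thesis
    unfolding power_eq \<chi>_def by (simp add: mult.commute)
qed

lemma lam_power_eq_powi:
  assumes "2 * int r dvd int m - k"
  shows "lam r ^ m = lam r powi k"
proof -
  obtain j where "int m - k = 2 * int r * j"
    using assms by (elim dvdE)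
  then have "int m = k + int (2 * r) * j"
    by simp
  have "lam r \<noteq> 0"
    by (simp add: lam_def)
  have "lam r ^ m = lam r powi (k + int (2 * r) * j)"
    unfolding \<open>int m = _\<close>[symmetric] by (rule power_int_of_nat[symmetric])
  also have "\<dots> = lam r powi k * (lam r ^ (2 * r)) powi j"
    using \<open>lam r \<noteq> 0\<close> by (simp add: power_int_add power_int_mult power_mult)
  finally show ?thesis
    by (simp add: lam_power_2r)
qed

lemma lam_diff_power_prime_power_cong:
  assumes "r > 0" "prime p" "odd p" "\<epsilon> = 1 \<or> \<epsilon> = -1" "2 * int r dvd int p ^ s + \<epsilon>"
  shows "cong_Rr r p ((lam r ^ c - inverse (lam r) ^ c) ^ p ^ s)
           (of_int (- \<epsilon>) * (lam r ^ c - inverse (lam r) ^ c))"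
proof -
  have "lam r ^ p ^ s = lam r powi (- \<epsilon>)"
    using assms(5) by (intro lam_power_eq_powi) simp
  moreover have "(lam r ^ c) ^ p ^ s = (lam r ^ p ^ s) ^ c"
    "(inverse (lam r) ^ c) ^ p ^ s = inverse (lam r ^ p ^ s) ^ c"
    by (simp_all only: power_inverse[symmetric] power_mult[symmetric] mult.commute)
  ultimately have "(lam r ^ c) ^ p ^ s - (inverse (lam r) ^ c) ^ p ^ s
      = of_int (- \<epsilon>) * (lam r ^ c - inverse (lam r) ^ c)"
    using assms(4) by auto
  moreover have "cong_Rr r p ((lam r ^ c - inverse (lam r) ^ c) ^ p ^ s)
      ((lam r ^ c) ^ p ^ s - (inverse (lam r) ^ c) ^ p ^ s)"
    using assms by (intro cong_Rr_diff_power_prime_power Rr_power Rr_lam Rr_inverse_lam)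
  ultimately show ?thesis
    by simp
qed

lemma eta_Delta_power_prime_power_cong:
  assumes "r > 0" "prime p" "odd p" "\<epsilon> = 1 \<or> \<epsilon> = -1"
    and "2 * int r dvd int p ^ s + \<epsilon>" "\<not> int p dvd 2 * int r"
  shows "cong_Rr r p ((eta r * Delta r i) ^ p ^ s)
           (of_int (- \<epsilon> * Legendre (- 2 * int r) (int p) ^ s) * eta r * Delta r i)"
proof -
  define u where "u = lam r ^ Suc i - inverse (lam r) ^ Suc i"
  define \<chi> where "\<chi> = Legendre (- 2 * int r) (int p) ^ s"
  have eta_Delta: "eta r * Delta r i = (-1) ^ i * (kappa r * u)"
    unfolding eta_eq_kappa u_def mult.assoc lam_diff_mult_Delta by (simp add: ac_simps)
  have "odd (p ^ s)"
    using \<open>odd p\<close> by simp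
  then have "((-1 :: complex) ^ i) ^ p ^ s = (-1) ^ i"
    by (auto simp: minus_one_power_iff simp flip: power_mult)
  then have power_eq: "(eta r * Delta r i) ^ p ^ s = (-1) ^ i * (kappa r ^ p ^ s * u ^ p ^ s)"
    unfolding eta_Delta by (simp only: power_mult_distrib)
  have "cong_Rr r p (kappa r ^ p ^ s * u ^ p ^ s) (of_int \<chi> * kappa r * (of_int (- \<epsilon>) * u))"
    unfolding \<chi>_def u_def using assms
    by (intro cong_Rr_mult kappa_power_prime_power_cong lam_diff_power_prime_power_cong
        Rr_power Rr_kappa Rr_mult Rr_of_int Rr_diff Rr_lam Rr_inverse_lam)
  moreover have "(-1) ^ i \<in> Rr r"
    using Rr_of_int[OF \<open>r > 0\<close>, of "(-1) ^ i"] by simp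
  ultimately have "cong_Rr r p ((eta r * Delta r i) ^ p ^ s)
      ((-1) ^ i * (of_int \<chi> * kappa r * (of_int (- \<epsilon>) * u)))"
    unfolding power_eq using cong_Rr_mult_left[OF \<open>r > 0\<close>] by blast
  then show ?thesis
    unfolding mult.assoc[of _ "eta r"] eta_Delta \<chi>_def by (simp add: ac_simps)
qed

lemma not_dvd_of_dvd_prime_power_plus_unit:
  assumes "prime p" "s \<ge> 1" "\<epsilon> = 1 \<or> \<epsilon> = -1" "d dvd int p ^ s + \<epsilon>"
  shows "\<not> int p dvd d"
proof
  assume "int p dvd d"
  then have "int p dvd int p ^ s + \<epsilon>"
    using assms(4) by (rule dvd_trans)
  moreover have "int p dvd int p ^ s"
    using \<open>s \<ge> 1\<close> by (simp add: dvd_power)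
  ultimately have "int p dvd \<epsilon>"
    by (simp add: dvd_add_right_iff)
  then show False
    using assms(1,3) by (auto simp: prime_gt_1_nat)
qed

theorem proposition3:
  fixes p s r :: nat and \<epsilon> :: int
  assumes "prime p" and "odd p" and "s \<ge> 1" and "r \<ge> 3"
    and "\<epsilon> = 1 \<or> \<epsilon> = -1"
    and "int r dvd (int p ^ s + \<epsilon>) div 2"
  shows "cong_mod_module r p (omega_tilde r p s)
           (scaled_omega r (of_int (- \<epsilon> * Legendre (- 2 * int r) (int p) ^ s)))"
proof -
  have "r > 0"
    using \<open>r \<ge> 3\<close> by simp
  have "even (int p ^ s + \<epsilon>)"
    using \<open>odd p\<close> \<open>\<epsilon> = 1 \<or> \<epsilon> = -1\<close> by auto
  then have "2 * int r dvd int p ^ s + \<epsilon>"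
    using assms(6) by (metis dvd_mult_div_cancel mult_dvd_mono dvd_refl)
  moreover from this have "\<not> int p dvd 2 * int r"
    using assms by (intro not_dvd_of_dvd_prime_power_plus_unit)
  ultimately show ?thesis
    using eta_Delta_power_prime_power_cong[OF \<open>r > 0\<close> \<open>prime p\<close> \<open>odd p\<close> \<open>\<epsilon> = 1 \<or> \<epsilon> = -1\<close>]
    unfolding cong_mod_module_def omega_tilde_def scaled_omega_def cong_Rr_def by simp
qed

end
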